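(* Let $R^*=\sup\{R(\theta_0,s):\theta_0\in[0,\bar\theta),\ s\in\mathcal S(\theta_0)\}$, where $R(\theta_0,s)=\int_{\theta_0}^{\bar\theta}J(\theta)s(\theta)\,dF(\theta)+v(\theta_0)(1-F(\theta_0))$, and let $$R_1=\sup_{\theta\in[0,\bar\theta)}\Big(\theta\,\tfrac{1+F(\theta)}{2}+v(\theta)\Big)\big(1-F(\theta)\big)$$ be the maximal revenue from selling a single positional good (all participants pooled at one level). Then $R_1\ge \tfrac12 R^*$. No regularity assumption on $F$ (such as monotonicity of $J$) is required.
   Context: Let $0<\bar\theta<\infty$, $\Theta=[0,\bar\theta]$, $F$ a cdf on $\Theta$ with continuous, strictly positive density $f$, $dF=f\,d\theta$, and $J(\theta)=\theta-\frac{1-F(\theta)}{f(\theta)}$. The intrinsic value $v:\Theta\to[0,\infty)$ is twice continuously differentiable with $v'\ge0$, $v''\le0$. For $\theta_0\in[0,\bar\theta)$ and bounded measurable $a,b:[\theta_0,\bar\theta]\to\mathbb R$, write $b\in\mathrm{MPS}(a)$ on $[\theta_0,\bar\theta]$ if $\int_x^{\bar\theta}b\,dF\le\int_x^{\bar\theta}a\,dF$ for all $x\in[\theta_0,\bar\theta]$, with equality at $x=\theta_0$. Let $\mathcal S(\theta_0)$ be the set of nondecreasing $s:[\theta_0,\bar\theta]\to[0,1]$ with $s\in\mathrm{MPS}(F)$ on $[\theta_0,\bar\theta]$. $R(\theta_0,s)$ is the seller's expected revenue from the mechanism with participation cutoff $\theta_0$ and interim status $s$, where a buyer of type $\theta$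 paying $p$ for status $\sigma$ gets $\theta\sigma-p+v(\theta)$. *)

theory Defs
  imports "HOL-Analysis.Analysis"
begin

definition Jv :: "(real \<Rightarrow> real) \<Rightarrow> (real \<Rightarrow> real) \<Rightarrow> real \<Rightarrow> real" where
  "Jv F f \<theta> = \<theta> - (1 - F \<theta>) / f \<theta>"

definition MPS :: "real \<Rightarrow> (real \<Rightarrow> real) \<Rightarrow> real \<Rightarrow> (real \<Rightarrow> real) \<Rightarrow> (real \<Rightarrow> real) \<Rightarrow> bool" where
  "MPS \<theta>bar f \<theta>0 b a \<longleftrightarrow>
     (\<forall>x\<in>{\<theta>0..\<theta>bar}. integral {x..\<theta>bar} (\<lambda>t. b t * f t) \<le> integral {x..\<theta>bar} (\<lambda>t. a t * f t))
     \<and> integral {\<theta>0..\<theta>bar} (\<lambda>t. b t * f t) = integral {\<theta>0..\<theta>bar} (\<lambda>t. a t * f t)"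

definition Sset :: "real \<Rightarrow> (real \<Rightarrow> real) \<Rightarrow> (real \<Rightarrow> real) \<Rightarrow> real \<Rightarrow> (real \<Rightarrow> real) set" where
  "Sset \<theta>bar F f \<theta>0 = {s. mono_on {\<theta>0..\<theta>bar} s \<and> (\<forall>t\<in>{\<theta>0..\<theta>bar}. 0 \<le> s t \<and> s t \<le> 1)
                          \<and> MPS \<theta>bar f \<theta>0 s F}"

definition Rev :: "real \<Rightarrow> (real \<Rightarrow> real) \<Rightarrow> (real \<Rightarrow> real) \<Rightarrow> (real \<Rightarrow> real) \<Rightarrow> real \<Rightarrow> (real \<Rightarrow> real) \<Rightarrow> real" where
  "Rev \<theta>bar F f v \<theta>0 s = integral {\<theta>0..\<theta>bar} (\<lambda>t. Jv F f t * s t * f t) + v \<theta>0 * (1 - F \<theta>0)"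

definition Rstar :: "real \<Rightarrow> (real \<Rightarrow> real) \<Rightarrow> (real \<Rightarrow> real) \<Rightarrow> (real \<Rightarrow> real) \<Rightarrow> real" where
  "Rstar \<theta>bar F f v = Sup {Rev \<theta>bar F f v \<theta>0 s | \<theta>0 s. \<theta>0 \<in> {0..<\<theta>bar} \<and> s \<in> Sset \<theta>bar F f \<theta>0}"

definition R1 :: "real \<Rightarrow> (real \<Rightarrow> real) \<Rightarrow> (real \<Rightarrow> real) \<Rightarrow> real" where
  "R1 \<theta>bar F v = (SUP \<theta>\<in>{0..<\<theta>bar}. (\<theta> * (1 + F \<theta>) / 2 + v \<theta>) * (1 - F \<theta>))"

end

theory Submission
  imports Defs
begin

text \<open>Put m(t) = t (1 - F t). Since -m is an antiderivative of J f and m(\<theta>bar) = 0, the second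
mean value theorem bounds the status part of the revenue of any nondecreasing s with values in
[0,1] by m(x) for some x \<ge> \<theta>0. Selling one
positional good to all types above x earns g(x) = (x (1 + F x)/2 + v x)(1 - F x), and
2 g(x) \<ge> m(x) + v(\<theta>0)(1 - F \<theta>0) as soon as m(x) exceeds the participation term
v(\<theta>0)(1 - F \<theta>0); otherwise that term is already at most g(\<theta>0).\<close>

definition posted_price_revenue :: "(real \<Rightarrow> real) \<Rightarrow> real \<Rightarrow> real" where
  "posted_price_revenue F t = t * (1 - F t)"

definition pooling_revenue :: "(real \<Rightarrow> real) \<Rightarrow> (real \<Rightarrow> real) \<Rightarrow> real \<Rightarrow> real" where
  "pooling_revenue F v t = (t * (1 + F t) / 2 + v t) * (1 - F t)"

lemma R1_eq_SUP_pooling_revenue: "R1 \<theta>bar F v = (SUP t\<in>{0..<\<theta>bar}. pooling_revenue F v t)"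
  by (simp add: R1_def pooling_revenue_def)

lemma cdf_has_real_derivative:
  fixes F f :: "real \<Rightarrow> real"
  assumes "continuous_on {a..b} f" and "\<And>x. x \<in> {a..b} \<Longrightarrow> F x = integral {a..x} f"
    and "t \<in> {a..b}"
  shows "(F has_real_derivative f t) (at t within {a..b})"
  using integral_has_real_derivative[OF assms(1,3)]
  by (rule has_field_derivative_transform_within[where d=1]) (use assms in auto)

lemma mono_on_if_nonneg_derivative:
  fixes g g' :: "real \<Rightarrow> real"
  assumes "\<And>t. t \<in> {a..b} \<Longrightarrow> (g has_real_derivative g' t) (at t within {a..b})"
    and "\<And>t. t \<in> {a..b} \<Longrightarrow> 0 \<le> g' t"
  shows "mono_on {a..b} g"
proof (rule mono_onI)
  fix x y assume xy: "x \<in> {a..b}" "y \<in> {a..b}" "x \<le> y"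
  have "(g' has_integral (g y - g x)) {x..y}"
  proof (rule fundamental_theorem_of_calculus[OF \<open>x \<le> y\<close>])
    fix t assume "t \<in> {x..y}"
    then have "(g has_real_derivative g' t) (at t within {x..y})"
      using xy by (intro DERIV_subset[OF assms(1)]) auto
    then show "(g has_vector_derivative g' t) (at t within {x..y})"
      by (simp add: has_real_derivative_iff_has_vector_derivative)
  qed
  then have "0 \<le> g y - g x"
    by (rule has_integral_nonneg) (use assms(2) xy in auto)
  then show "g x \<le> g y"
    by simp
qed

lemma virtual_surplus_has_integral:
  fixes F f :: "real \<Rightarrow> real"
  assumes "a \<le> c" and "{a..c} \<subseteq> S"
    and "\<And>t. t \<in> S \<Longrightarrow> (F has_real_derivative f t) (at t within S)"
    and "\<And>t. t \<in> S \<Longrightarrow> f t \<noteq> 0"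
  shows "((\<lambda>t. Jv F f t * f t) has_integral posted_price_revenue F a - posted_price_revenue F c) {a..c}"
proof -
  have "((\<lambda>t. - posted_price_revenue F t) has_real_derivative Jv F f t * f t) (at t within {a..c})"
    if "t \<in> {a..c}" for t
  proof -
    have "((\<lambda>t. 1 - F t) has_real_derivative 0 - f t) (at t within {a..c})"
      using that assms(2) by (intro DERIV_diff DERIV_const DERIV_subset[OF assms(3)]) auto
    then have "((\<lambda>t. - (t * (1 - F t))) has_real_derivative - (1 * (1 - F t) + (0 - f t) * t))
        (at t within {a..c})"
      by (rule DERIV_minus[OF DERIV_mult[OF DERIV_ident]])
    moreover have "- (1 * (1 - F t) + (0 - f t) * t) = Jv F f t * f t"
      using assms(4)[of t] that assms(2) by (auto simp: Jv_def field_simps)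
    ultimately show ?thesis
      by (simp add: posted_price_revenue_def)
  qed
  then have "((\<lambda>t. Jv F f t * f t) has_integral
      (- posted_price_revenue F c - - posted_price_revenue F a)) {a..c}"
    by (intro fundamental_theorem_of_calculus assms(1))
      (simp add: has_real_derivative_iff_has_vector_derivative)
  then show ?thesis
    by simp
qed

lemma integral_monotone_weight_le:
  fixes s h m :: "real \<Rightarrow> real"
  assumes "a \<le> b"
    and "mono_on {a..b} s" and "\<And>t. t \<in> {a..b} \<Longrightarrow> 0 \<le> s t \<and> s t \<le> 1"
    and h: "\<And>x y. a \<le> x \<Longrightarrow> x \<le> y \<Longrightarrow> y \<le> b \<Longrightarrow> (h has_integral m x - m y) {x..y}"
    and "\<And>t. t \<in> {a..b} \<Longrightarrow> 0 \<le> m t" and "m b = 0"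
  shows "\<exists>x\<in>{a..b}. integral {a..b} (\<lambda>t. s t * h t) \<le> m x"
proof -
  have "h integrable_on {a..b}"
    using h[OF order_refl \<open>a \<le> b\<close> order_refl] by blast
  moreover have "\<And>x y. a \<le> x \<Longrightarrow> x \<le> y \<Longrightarrow> y \<le> b \<Longrightarrow> s x \<le> s y"
    using \<open>mono_on {a..b} s\<close> by (simp add: mono_onD)
  ultimately obtain c where c: "c \<in> {a..b}"
    and mvt: "integral {a..b} (\<lambda>t. s t * h t) = s a * integral {a..c} h + s b * integral {c..b} h"
    using second_mean_value_theorem \<open>a \<le> b\<close> by blast
  have "integral {a..c} h = m a - m c" "integral {c..b} h = m c - m b"
    using h c by (auto intro: integral_unique)
  with mvt \<open>m b = 0\<close> have I: "integral {a..b} (\<lambda>t. s t * h t) = s a * m a + (s b - s a) * m c"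
    by (simp add: algebra_simps)
  have s: "0 \<le> s a" "s a \<le> s b" "s b \<le> 1"
    using assms(3)[of a] assms(3)[of b] mono_onD[OF \<open>mono_on {a..b} s\<close>, of a b] \<open>a \<le> b\<close> by auto
  define M where "M = max (m a) (m c)"
  have "0 \<le> M"
    using assms(5)[of a] \<open>a \<le> b\<close> by (simp add: M_def)
  have "s a * m a + (s b - s a) * m c \<le> s a * M + (s b - s a) * M"
    using s by (intro add_mono mult_left_mono) (auto simp: M_def)
  also have "\<dots> = s b * M"
    by (simp add: algebra_simps)
  also have "\<dots> \<le> M"
    using s \<open>0 \<le> M\<close> by (intro mult_left_le_one_le) auto
  finally show ?thesis
    using I c \<open>a \<le> b\<close> by (auto simp: M_def max_def split: if_splits)
qed

lemma posted_price_plus_participation_le_twice_pooling: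
  fixes F v :: "real \<Rightarrow> real"
  assumes "0 \<le> a" "0 \<le> F a" "F a \<le> F x" "F x \<le> 1" "0 \<le> v a" "v a \<le> v x"
  shows "posted_price_revenue F x + v a * (1 - F a)
      \<le> 2 * max (pooling_revenue F v a) (pooling_revenue F v x)"
proof (cases "posted_price_revenue F x \<le> v a * (1 - F a)")
  case True
  have "0 \<le> a * (1 + F a) / 2 * (1 - F a)"
    using assms by auto
  then have "v a * (1 - F a) \<le> pooling_revenue F v a"
    by (simp add: pooling_revenue_def algebra_simps)
  with True show ?thesis
    by linarith
next
  case False
  let ?m = "posted_price_revenue F x"
  have "2 * pooling_revenue F v x = ?m * (1 + F x) + 2 * v x * (1 - F x)"
    by (simp add: pooling_revenue_def posted_price_revenue_def field_simps)
  moreover have "v a * (1 - F x) \<le> v x * (1 - F x)"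
    using assms by (simp add: mult_right_mono)
  moreover have "v a * (1 - F a) * F x \<le> ?m * F x"
    using False assms by (simp add: mult_right_mono)
  moreover have "0 \<le> v a * ((1 - F x) * (1 + F a))"
    using assms by simp
  ultimately have "?m + v a * (1 - F a) \<le> 2 * pooling_revenue F v x"
    by (simp add: algebra_simps)
  then show ?thesis
    by linarith
qed

lemma bdd_above_pooling_revenue:
  assumes "compact S" and "continuous_on S F" and "continuous_on S v"
  shows "bdd_above (pooling_revenue F v ` S)"
proof -
  have "continuous_on S (pooling_revenue F v)"
    unfolding pooling_revenue_def using assms(2,3) by (intro continuous_intros) auto
  then show ?thesis
    using assms(1) by (intro bounded_imp_bdd_above compact_imp_bounded compact_continuous_image)
qed

lemma Rev_le_twice_R1:
  fixes F f v s :: "real \<Rightarrow> real"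
  assumes a: "0 \<le> a" "a < \<theta>bar" and s: "s \<in> Sset \<theta>bar F f a"
    and F: "mono_on {0..\<theta>bar} F" "\<And>t. t \<in> {0..\<theta>bar} \<Longrightarrow> 0 \<le> F t \<and> F t \<le> 1" "F \<theta>bar = 1"
    and v: "mono_on {0..\<theta>bar} v" "\<And>t. t \<in> {0..\<theta>bar} \<Longrightarrow> 0 \<le> v t"
    and J: "\<And>x y. 0 \<le> x \<Longrightarrow> x \<le> y \<Longrightarrow> y \<le> \<theta>bar \<Longrightarrow>
      ((\<lambda>t. Jv F f t * f t) has_integral posted_price_revenue F x - posted_price_revenue F y) {x..y}"
    and bdd: "bdd_above (pooling_revenue F v ` {0..<\<theta>bar})"
  shows "Rev \<theta>bar F f v a s \<le> 2 * R1 \<theta>bar F v"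
proof -
  have s_mono: "mono_on {a..\<theta>bar} s" and s_bounds: "\<And>t. t \<in> {a..\<theta>bar} \<Longrightarrow> 0 \<le> s t \<and> s t \<le> 1"
    using s by (auto simp: Sset_def)
  have "\<exists>x\<in>{a..\<theta>bar}. integral {a..\<theta>bar} (\<lambda>t. s t * (Jv F f t * f t)) \<le> posted_price_revenue F x"
  proof (rule integral_monotone_weight_le[OF _ s_mono s_bounds])
    show "a \<le> \<theta>bar"
      using a by simp
    show "((\<lambda>t. Jv F f t * f t) has_integral posted_price_revenue F x - posted_price_revenue F y) {x..y}"
      if "a \<le> x" "x \<le> y" "y \<le> \<theta>bar" for x y
      using J that a by simp
    show "0 \<le> posted_price_revenue F t" if "t \<in> {a..\<theta>bar}" for t
      using F(2)[of t] that a by (simp add: posted_price_revenue_def)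
    show "posted_price_revenue F \<theta>bar = 0"
      using F(3) by (simp add: posted_price_revenue_def)
  qed
  moreover have "(\<lambda>t. s t * (Jv F f t * f t)) = (\<lambda>t. Jv F f t * s t * f t)"
    by (simp add: fun_eq_iff mult_ac)
  ultimately obtain x where x: "x \<in> {a..\<theta>bar}"
    and status: "integral {a..\<theta>bar} (\<lambda>t. Jv F f t * s t * f t) \<le> posted_price_revenue F x"
    by auto
  have "posted_price_revenue F x + v a * (1 - F a)
      \<le> 2 * max (pooling_revenue F v a) (pooling_revenue F v x)"
    using a x F(2)[of a] F(2)[of x] v(2)[of a]
    by (intro posted_price_plus_participation_le_twice_pooling mono_onD[OF F(1)] mono_onD[OF v(1)]) auto
  also have "\<dots> \<le> 2 * R1 \<theta>bar F v"
  proof -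
    have pooling_le: "pooling_revenue F v t \<le> R1 \<theta>bar F v" if "t \<in> {0..<\<theta>bar}" for t
      unfolding R1_eq_SUP_pooling_revenue by (rule cSUP_upper[OF that bdd])
    have "0 \<le> pooling_revenue F v a"
      using a F(2)[of a] v(2)[of a] by (simp add: pooling_revenue_def)
    moreover have "pooling_revenue F v \<theta>bar = 0"
      using F(3) by (simp add: pooling_revenue_def)
    ultimately have "pooling_revenue F v x \<le> R1 \<theta>bar F v"
      using pooling_le[of a] pooling_le[of x] a x by (cases "x = \<theta>bar") auto
    then show ?thesis
      using pooling_le[of a] a by simp
  qed
  finally show ?thesis
    using status by (simp add: Rev_def)
qed

theorem proposition2:
  fixes \<theta>bar :: real and F f v v' v'' :: "real \<Rightarrow> real"
  assumes "0 < \<theta>bar"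
    and "continuous_on {0..\<theta>bar} f"
    and "\<And>t. t \<in> {0..\<theta>bar} \<Longrightarrow> 0 < f t"
    and "\<And>x. x \<in> {0..\<theta>bar} \<Longrightarrow> F x = integral {0..x} f"
    and "F \<theta>bar = 1"
    and "\<And>t. t \<in> {0..\<theta>bar} \<Longrightarrow> 0 \<le> v t"
    and "\<And>t. t \<in> {0..\<theta>bar} \<Longrightarrow> (v has_real_derivative v' t) (at t within {0..\<theta>bar})"
    and "\<And>t. t \<in> {0..\<theta>bar} \<Longrightarrow> (v' has_real_derivative v'' t) (at t within {0..\<theta>bar})"
    and "continuous_on {0..\<theta>bar} v''"
    and "\<And>t. t \<in> {0..\<theta>bar} \<Longrightarrow> 0 \<le> v' t"
    and "\<And>t. t \<in> {0..\<theta>bar} \<Longrightarrow> v'' t \<le> 0"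
  shows "R1 \<theta>bar F v \<ge> Rstar \<theta>bar F f v / 2"
proof -
  let ?T = "{0..\<theta>bar}"
  have F_deriv: "\<And>t. t \<in> ?T \<Longrightarrow> (F has_real_derivative f t) (at t within ?T)"
    using assms(2,4) by (rule cdf_has_real_derivative)
  have F_mono: "mono_on ?T F"
    using F_deriv less_imp_le[OF assms(3)] by (rule mono_on_if_nonneg_derivative)
  have "F 0 = 0"
    using assms(1,4) by simp
  then have F_bounds: "0 \<le> F t \<and> F t \<le> 1" if "t \<in> ?T" for t
    using mono_onD[OF F_mono, of 0 t] mono_onD[OF F_mono, of t \<theta>bar] that assms(1,5) by auto
  have v_mono: "mono_on ?T v"
    using assms(7,10) by (rule mono_on_if_nonneg_derivative)
  have f_nonzero: "\<And>t. t \<in> ?T \<Longrightarrow> f t \<noteq> 0"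
    using assms(3) by (metis less_irrefl)
  have J_integral: "((\<lambda>t. Jv F f t * f t) has_integral
      posted_price_revenue F x - posted_price_revenue F y) {x..y}"
    if "0 \<le> x" "x \<le> y" "y \<le> \<theta>bar" for x y
    using that by (intro virtual_surplus_has_integral[OF _ _ F_deriv f_nonzero]) auto
  have "bdd_above (pooling_revenue F v ` ?T)"
    by (intro bdd_above_pooling_revenue compact_Icc
        DERIV_continuous_on[OF F_deriv] DERIV_continuous_on[OF assms(7)])
  then have bdd: "bdd_above (pooling_revenue F v ` {0..<\<theta>bar})"
    by (rule bdd_above_mono) auto
  have "Rev \<theta>bar F f v \<theta>0 s \<le> 2 * R1 \<theta>bar F v"
    if "\<theta>0 \<in> {0..<\<theta>bar}" "s \<in> Sset \<theta>bar F f \<theta>0" for \<theta>0 s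
    using that
    by (intro Rev_le_twice_R1[OF _ _ _ F_mono F_bounds assms(5) v_mono assms(6) J_integral bdd]) auto
  moreover have "F \<in> Sset \<theta>bar F f 0"
    using F_mono F_bounds by (simp add: Sset_def MPS_def)
  moreover have "0 \<in> {0..<\<theta>bar}"
    using assms(1) by simp
  ultimately have "Rstar \<theta>bar F f v \<le> 2 * R1 \<theta>bar F v"
    unfolding Rstar_def by (intro cSup_least) blast+
  then show ?thesis
    by simp
qed

end
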